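(* Let $s\in(0,1)$, let $\Omega\subset\mathbb R^2$ be a Jordan domain with $s$-hyperbolic growth, and let $g:\mathbb D\to\Omega$ be a conformal map. Then there is a constant $C<\infty$ such that for all $x\in\mathbb D$ with $|x|\ge 1/2$, $$d(g(x),\partial\Omega)\le C\log^{\frac{1}{s-1}}\Big(\frac{1}{1-|x|}\Big)\quad\text{and}\quad |g'(x)|\le \frac{C}{1-|x|}\log^{\frac{1}{s-1}}\Big(\frac{1}{1-|x|}\Big).$$
   Context: $\mathbb D$ is the open unit disk in $\mathbb C$. For a domain $\Omega\subset\mathbb R^2$, $d(z,\partial\Omega)$ denotes the Euclidean distance from $z$ to $\partial\Omega$, and the quasihyperbolic metric is $h_\Omega(z_1,z_2)=\inf_\gamma\int_\gamma \frac{|dz|}{d(z,\partial\Omega)}$, the infimum over all rectifiable arcs $\gamma\subset\Omega$ joining $z_1$ to $z_2$. For $s\in(0,1)$, a planar domain $\Omega$ has $s$-hyperbolic growth if there is a point $z_0\in\Omega$ such that $h_\Omega(z_0,z)\le \left(\frac{d(z_0,\partial\Omega)}{d(z,\partial\Omega)}\right)^{1-s}$ for all $z\in\Omega$. *)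

theory Defs
  imports "HOL-Complex_Analysis.Complex_Analysis"
begin

definition bdist :: "complex set \<Rightarrow> complex \<Rightarrow> real" where
  "bdist \<Omega> z = infdist z (frontier \<Omega>)"

text \<open>Quasihyperbolic metric: infimum over (piecewise C1, hence rectifiable) arcs in Omega
  joining z1 to z2 of the arclength integral of 1 / d(z, boundary Omega).\<close>
definition qh_dist :: "complex set \<Rightarrow> complex \<Rightarrow> complex \<Rightarrow> real" where
  "qh_dist \<Omega> z1 z2 =
     Inf {integral {0..1} (\<lambda>t. norm (vector_derivative \<gamma> (at t)) / bdist \<Omega> (\<gamma> t)) | \<gamma>.
            valid_path \<gamma> \<and> arc \<gamma> \<and> path_image \<gamma> \<subseteq> \<Omega> \<and>
            pathstart \<gamma> = z1 \<and> pathfinish \<gamma> = z2 \<and>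
            (\<lambda>t. norm (vector_derivative \<gamma> (at t)) / bdist \<Omega> (\<gamma> t)) integrable_on {0..1}}"

definition jordan_domain :: "complex set \<Rightarrow> bool" where
  "jordan_domain \<Omega> \<longleftrightarrow>
     (\<exists>c. simple_path c \<and> pathfinish c = pathstart c \<and> \<Omega> = inside (path_image c))"

definition hyperbolic_growth :: "real \<Rightarrow> complex set \<Rightarrow> bool" where
  "hyperbolic_growth s \<Omega> \<longleftrightarrow>
     (\<exists>z0\<in>\<Omega>. \<forall>z\<in>\<Omega>. qh_dist \<Omega> z0 z \<le> (bdist \<Omega> z0 / bdist \<Omega> z) powr (1 - s))"

end

theory Submission
  imports Defs
begin

text \<open>
  Two estimates are combined. The first is a Koebe-type distortion bound
  \<open>|g'(x)| \<le> 48 d(g x) / (1 - |x|)\<close>: if \<open>p\<close> is a boundary point nearest to \<open>g x\<close> and \<open>F\<close> is a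
  holomorphic square root of \<open>g - p\<close>, then \<open>F(\<bbbD>)\<close> contains the disc of radius \<open>|F x|/3\<close>
  about \<open>F x\<close> but is disjoint from \<open>-F(\<bbbD>)\<close>, so \<open>(|F x|/3) / (F + F x)\<close> is bounded by 1 on
  \<open>\<bbbD>\<close> and the Cauchy estimate applies to it.

  The second is a lower bound for the quasihyperbolic distance. By Schwarz--Pick, the inverse
  \<open>h\<close> of \<open>g\<close> satisfies \<open>|h'(w)| \<le> 2 (1 - |h w|\<^sup>2) / d(w)\<close>, hence \<open>-ln (1 - |h|\<^sup>2)\<close> grows
  along any curve in \<open>\<Omega>\<close> by at most four times its quasihyperbolic length. Therefore
  \<open>4 h\<^sub>\<Omega>(g a\<^sub>0, g x) \<ge> ln (1 / (1 - |x|)) - const\<close>, and \<open>s\<close>-hyperbolic growth turns this into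
  \<open>d(g x)\<^bsup>s-1\<^esup> \<ge> const \<cdot> ln (1 / (1 - |x|))\<close> for \<open>|x|\<close> close to 1, which is the distance bound.
  The derivative bound then follows from the Koebe-type estimate.
\<close>

lemma bdist_pos:
  assumes "open \<Omega>" "\<Omega> \<noteq> UNIV" "w \<in> \<Omega>"
  shows "0 < bdist \<Omega> w"
proof -
  have "frontier \<Omega> \<noteq> {}" using assms(2,3) frontier_eq_empty by blast
  moreover have "w \<notin> frontier \<Omega>" using assms(1,3) by (simp add: frontier_def interior_open)
  ultimately show ?thesis
    unfolding bdist_def using infdist_pos_not_in_closed[OF frontier_closed] by blast
qed

lemma ball_bdist_subset:
  assumes "w \<in> \<Omega>"
  shows "ball w (bdist \<Omega> w) \<subseteq> \<Omega>"
proof (rule ccontr)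
  assume not_sub: "\<not> ?thesis"
  then have "0 < bdist \<Omega> w" by (metis ball_eq_empty empty_subsetI not_le)
  then have "ball w (bdist \<Omega> w) \<inter> frontier \<Omega> \<noteq> {}"
    using connected_Int_frontier[OF connected_ball, of w "bdist \<Omega> w" \<Omega>] assms not_sub
    by (metis Diff_eq_empty_iff IntI centre_in_ball empty_iff)
  then obtain y where "y \<in> frontier \<Omega>" "dist w y < bdist \<Omega> w" by auto
  then show False using infdist_le[of y "frontier \<Omega>" w] unfolding bdist_def by auto
qed

lemma bdist_attained:
  assumes "open \<Omega>" "\<Omega> \<noteq> UNIV" "w \<in> \<Omega>"
  obtains p where "p \<notin> \<Omega>" "dist w p = bdist \<Omega> w"
proof -
  have "frontier \<Omega> \<noteq> {}" using assms(2,3) frontier_eq_empty by blast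
  then obtain p where "p \<in> frontier \<Omega>" "bdist \<Omega> w = dist w p"
    using infdist_attains_inf[OF frontier_closed] unfolding bdist_def by blast
  moreover have "p \<notin> \<Omega>" using \<open>p \<in> frontier \<Omega>\<close> assms(1) by (simp add: frontier_def interior_open)
  ultimately show ?thesis using that by simp
qed

lemma bdist_le_diameter:
  assumes "bounded \<Omega>" "\<Omega> \<noteq> UNIV" "w \<in> \<Omega>"
  shows "bdist \<Omega> w \<le> diameter \<Omega>"
proof -
  obtain p where p: "p \<in> frontier \<Omega>" using assms(2,3) frontier_eq_empty by blast
  have "bdist \<Omega> w \<le> dist w p" unfolding bdist_def by (rule infdist_le[OF p])
  also have "\<dots> \<le> diameter (closure \<Omega>)"
    using p assms(1,3) closure_subset by (intro diameter_bounded_bound) (auto simp: frontier_def)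
  finally show ?thesis using diameter_closure[OF assms(1)] by simp
qed

lemma jordan_domain_bounded: "jordan_domain \<Omega> \<Longrightarrow> bounded \<Omega>"
  unfolding jordan_domain_def
  by (metis bounded_inside compact_imp_bounded compact_path_image simple_path_imp_path)

section \<open>Derivative bounds for bounded holomorphic functions\<close>

lemma norm_deriv_le_bounded_on_ball:
  assumes "f holomorphic_on ball w r" "0 < r" "\<And>z. z \<in> ball w r \<Longrightarrow> norm (f z) \<le> M"
  shows "norm (deriv f w) \<le> 2 * M / r"
proof -
  have hol: "f holomorphic_on ball w (r/2)"
    using assms(1) by (rule holomorphic_on_subset) (use assms(2) in \<open>simp add: subset_ball\<close>)
  have "continuous_on (cball w (r/2)) f"
    using holomorphic_on_imp_continuous_on[OF assms(1)]
    by (rule continuous_on_subset) (use assms(2) in \<open>simp add: cball_subset_ball_iff\<close>)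
  from Cauchy_inequality[OF hol this, of M 1] assms(2,3)
  show ?thesis by (simp add: dist_norm mult.commute)
qed

lemma Moebius_function_has_derivative_at_centre:
  assumes "norm z < 1"
  shows "(Moebius_function 0 z has_field_derivative 1 / of_real (1 - norm z ^ 2)) (at z)"
proof -
  have cz: "1 - cnj z * z = of_real (1 - norm z ^ 2)"
    using complex_norm_square[of z] by (simp add: mult.commute)
  have "norm z ^ 2 < 1" using assms by (simp add: abs_square_less_1)
  then have nz: "1 - cnj z * z \<noteq> 0" unfolding cz by (simp only: of_real_eq_0_iff)
  have "((\<lambda>u. (u - z) / (1 - cnj z * u)) has_field_derivative 1 / (1 - cnj z * z)) (at z)"
    by (rule derivative_eq_intros refl)+ (use nz in \<open>simp_all add: power2_eq_square\<close>)
  then show ?thesis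
    by (simp add: Moebius_function_simple[abs_def] cz)
qed

lemma norm_deriv_le_disc_valued:
  assumes hol: "h holomorphic_on ball w r" and r: "0 < r" and into: "h ` ball w r \<subseteq> ball 0 1"
  shows "norm (deriv h w) \<le> 2 * (1 - norm (h w) ^ 2) / r"
proof -
  have h_lt_1: "norm (h u) < 1" if "u \<in> ball w r" for u
    using into that by (auto simp: image_subset_iff)
  define z where "z = h w"
  have z: "norm z < 1" using h_lt_1 r by (simp add: z_def)
  define M where "M = Moebius_function 0 z \<circ> h"
  have "M holomorphic_on ball w r"
    unfolding M_def using hol Moebius_function_holomorphic[OF z] into by (rule holomorphic_on_compose_gen)
  moreover have "norm (M u) \<le> 1" if "u \<in> ball w r" for u
    using Moebius_function_norm_lt_1[OF z h_lt_1[OF that], of 0] by (simp add: M_def)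
  ultimately have M_bound: "norm (deriv M w) \<le> 2 / r"
    using norm_deriv_le_bounded_on_ball[of M w r 1] r by simp
  have "h field_differentiable at w"
    using hol r by (auto intro: holomorphic_on_imp_differentiable_at)
  then have "deriv M w = deriv h w / of_real (1 - norm z ^ 2)"
    unfolding M_def z_def
    using deriv_chain Moebius_function_has_derivative_at_centre[OF z[unfolded z_def]]
    by (metis DERIV_imp_deriv field_differentiable_def times_divide_eq_left mult_1)
  moreover have "0 < 1 - norm z ^ 2" using z by (simp add: abs_square_less_1)
  ultimately have "norm (deriv h w) = norm (deriv M w) * (1 - norm z ^ 2)"
    by (simp del: of_real_diff of_real_power add: norm_divide)
  also have "\<dots> \<le> 2 / r * (1 - norm z ^ 2)"
    using M_bound \<open>0 < 1 - norm z ^ 2\<close> by (intro mult_right_mono) auto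
  finally show ?thesis by (simp add: z_def)
qed

lemma norm_deriv_le_bdist_of_disc_valued:
  assumes hol: "h holomorphic_on \<Omega>" and \<Omega>: "open \<Omega>" "\<Omega> \<noteq> UNIV"
    and into: "h ` \<Omega> \<subseteq> ball 0 1" and w: "w \<in> \<Omega>"
  shows "norm (deriv h w) \<le> 2 * (1 - norm (h w) ^ 2) / bdist \<Omega> w"
proof (rule norm_deriv_le_disc_valued)
  show "h holomorphic_on ball w (bdist \<Omega> w)"
    using hol ball_bdist_subset[OF w] by (rule holomorphic_on_subset)
  show "h ` ball w (bdist \<Omega> w) \<subseteq> ball 0 1"
    using into ball_bdist_subset[OF w] by blast
qed (rule bdist_pos[OF \<Omega> w])

section \<open>A Koebe-type distortion bound\<close>

lemma ball_subset_if_squares_cover_ball: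
  fixes A :: "complex set"
  assumes A: "open A" "q \<in> A" "\<And>u. u \<in> A \<Longrightarrow> - u \<notin> A"
    and squares: "ball (q ^ 2) (norm q ^ 2) \<subseteq> (\<lambda>u. u ^ 2) ` A"
  shows "ball q (norm q / 3) \<subseteq> A"
proof -
  have cover: "ball q (norm q / 3) \<subseteq> A \<union> uminus ` A"
  proof
    fix u assume "u \<in> ball q (norm q / 3)"
    then have uq: "norm (u - q) < norm q / 3" by (simp add: dist_norm norm_minus_commute)
    have "norm (u + q) \<le> norm (u - q) + 2 * norm q"
      using norm_triangle_ineq[of "u - q" "2 * q"] by (simp add: norm_mult add.commute)
    then have uq': "norm (u + q) \<le> 7 / 3 * norm q" using uq by simp
    have "u ^ 2 - q ^ 2 = (u - q) * (u + q)" by (simp add: power2_eq_square algebra_simps)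
    then have "norm (u ^ 2 - q ^ 2) = norm (u - q) * norm (u + q)" by (simp add: norm_mult)
    also have "\<dots> \<le> norm q / 3 * (7 / 3 * norm q)" using uq uq' by (intro mult_mono) auto
    also have "\<dots> < norm q ^ 2"
    proof -
      have "0 < norm q" using uq norm_ge_zero[of "u - q"] by linarith
      then show ?thesis by (simp add: power2_eq_square)
    qed
    finally have "u ^ 2 \<in> ball (q ^ 2) (norm q ^ 2)" by (simp add: dist_norm norm_minus_commute)
    then obtain v where "v \<in> A" "u ^ 2 = v ^ 2" using squares by blast
    then have "u = v \<or> u = - v" by (simp add: power2_eq_iff)
    then show "u \<in> A \<union> uminus ` A" using \<open>v \<in> A\<close> by auto
  qed
  have "A \<inter> uminus ` A \<inter> ball q (norm q / 3) = {}" using A(3) by auto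
  then have "A \<inter> ball q (norm q / 3) = {} \<or> uminus ` A \<inter> ball q (norm q / 3) = {}"
    using connectedD[OF connected_ball A(1) open_negations[OF A(1)] _ cover] by blast
  then show ?thesis
  proof
    assume "A \<inter> ball q (norm q / 3) = {}"
    then have "q = 0" using A(2) by (metis IntI centre_in_ball empty_iff norm_eq_zero
          zero_less_divide_iff zero_less_norm_iff zero_less_numeral)
    then show ?thesis by simp
  next
    assume "uminus ` A \<inter> ball q (norm q / 3) = {}"
    then show ?thesis using cover by blast
  qed
qed

lemma injective_holomorphic_sqrt:
  assumes hol: "g holomorphic_on S" and inj: "inj_on g S" and S: "contractible S"
    and p: "p \<notin> g ` S"
  obtains F where "F holomorphic_on S" "\<And>z. z \<in> S \<Longrightarrow> g z = F z ^ 2 + p"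
    "inj_on F S" "\<And>z z'. z \<in> S \<Longrightarrow> z' \<in> S \<Longrightarrow> F z' \<noteq> - F z"
proof -
  have "(\<lambda>z. g z - p) holomorphic_on S" by (intro holomorphic_intros hol)
  moreover have "g z - p \<noteq> 0" if "z \<in> S" for z using p that by auto
  ultimately obtain F where holF: "F holomorphic_on S" and F: "\<And>z. z \<in> S \<Longrightarrow> g z - p = F z ^ 2"
    using contractible_imp_holomorphic_sqrt[OF _ S] by blast
  have gF: "g z = F z ^ 2 + p" if "z \<in> S" for z using F[OF that] by (simp add: algebra_simps)
  have eq: "z' = z" if "z \<in> S" "z' \<in> S" "F z' = F z \<or> F z' = - F z" for z z'
  proof -
    have "F z' ^ 2 = F z ^ 2" using that(3) by auto
    then have "g z' = g z" using gF that(1,2) by simp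
    then show ?thesis using inj that(1,2) by (meson inj_onD)
  qed
  have "F z' \<noteq> - F z" if "z \<in> S" "z' \<in> S" for z z'
  proof
    assume "F z' = - F z"
    then have "F z = 0" using eq[OF that] by simp
    then have "g z = p" using gF[OF that(1)] by simp
    then show False using p that(1) by blast
  qed
  moreover have "inj_on F S" using eq by (auto intro: inj_onI)
  ultimately show ?thesis using that holF gF by blast
qed

lemma norm_deriv_le_via_sqrt:
  assumes holF: "F holomorphic_on ball 0 1" and gF: "\<And>z. z \<in> ball 0 1 \<Longrightarrow> g z = F z ^ 2 + p"
    and x: "norm x < 1" and "F x \<noteq> 0"
    and far: "\<And>z. z \<in> ball 0 1 \<Longrightarrow> norm (F x) / 3 \<le> norm (F z + F x)"
  shows "norm (deriv g x) \<le> 48 * norm (F x) ^ 2 / (1 - norm x)"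
proof -
  define q where "q = F x"
  have x_in: "x \<in> ball 0 1" using x by simp
  have q0: "0 < norm q" using \<open>F x \<noteq> 0\<close> by (simp add: q_def)
  have nonzero: "F z + q \<noteq> 0" if "z \<in> ball 0 1" for z using far[OF that] q0 by (auto simp: q_def)
  define c where "c = complex_of_real (norm q / 3)"
  define G where "G z = c / (F z + q)" for z
  have G_bound: "norm (deriv G x) \<le> 2 * 1 / (1 - norm x)"
  proof (rule norm_deriv_le_bounded_on_ball)
    have sub: "ball x (1 - norm x) \<subseteq> ball 0 1" by (simp add: ball_subset_ball_iff dist_norm)
    show "G holomorphic_on ball x (1 - norm x)"
      unfolding G_def using nonzero sub by (intro holomorphic_intros holomorphic_on_subset[OF holF sub]) auto
    show "norm (G z) \<le> 1" if "z \<in> ball x (1 - norm x)" for z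
    proof -
      have "z \<in> ball 0 1" using sub that by blast
      then have "norm q / 3 \<le> norm (F z + q)" "0 < norm (F z + q)" using far nonzero by (auto simp: q_def)
      moreover have "norm (G z) = (norm q / 3) / norm (F z + q)"
        unfolding G_def c_def norm_divide norm_of_real by simp
      ultimately show ?thesis by (simp only: divide_le_eq_1_pos)
    qed
  qed (use x in simp)
  have dF: "(F has_field_derivative deriv F x) (at x)"
    using holF x_in by (simp add: holomorphic_derivI)
  have "(G has_field_derivative - (c * deriv F x) / (F x + q) ^ 2) (at x)"
    unfolding G_def
    by (rule derivative_eq_intros dF refl)+ (use nonzero x_in in \<open>auto simp: power2_eq_square\<close>)
  moreover have "F x + q = 2 * q" by (simp add: q_def)
  ultimately have dG: "deriv G x = - (c * deriv F x) / (2 * q) ^ 2" by (metis DERIV_imp_deriv)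
  have "((\<lambda>z. F z ^ 2 + p) has_field_derivative 2 * q * deriv F x) (at x)"
    by (rule derivative_eq_intros dF refl)+ (simp add: q_def)
  then have "(g has_field_derivative 2 * q * deriv F x) (at x)"
    by (rule has_field_derivative_transform_within_open[OF _ open_ball x_in]) (use gF in auto)
  then have "deriv g x = 2 * q * deriv F x" by (rule DERIV_imp_deriv)
  then have "norm (deriv g x) = 24 * norm q ^ 2 * norm (deriv G x)"
    using q0 by (simp add: dG c_def norm_divide norm_mult norm_power field_simps power2_eq_square)
  also have "\<dots> \<le> 24 * norm q ^ 2 * (2 * 1 / (1 - norm x))"
    using G_bound by (intro mult_left_mono) auto
  finally show ?thesis by (simp add: q_def)
qed

lemma norm_deriv_le_bdist:
  assumes hol: "g holomorphic_on ball 0 1" and inj: "inj_on g (ball 0 1)"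
    and not_UNIV: "g ` ball 0 1 \<noteq> UNIV" and x: "norm x < 1"
  shows "norm (deriv g x) \<le> 48 * bdist (g ` ball 0 1) (g x) / (1 - norm x)"
proof -
  define \<Omega> where "\<Omega> = g ` ball 0 1"
  define d where "d = bdist \<Omega> (g x)"
  have x_in: "x \<in> ball 0 1" using x by simp
  have "open \<Omega>" unfolding \<Omega>_def using open_mapping_thm3[OF hol _ inj] by simp
  then obtain p where p: "p \<notin> \<Omega>" "dist (g x) p = d"
    using bdist_attained not_UNIV x_in unfolding \<Omega>_def d_def by blast
  obtain F where holF: "F holomorphic_on ball 0 1" and gF: "\<And>z. z \<in> ball 0 1 \<Longrightarrow> g z = F z ^ 2 + p"
    and injF: "inj_on F (ball 0 1)"
    and antipodal: "\<And>z z'. z \<in> ball 0 1 \<Longrightarrow> z' \<in> ball 0 1 \<Longrightarrow> F z' \<noteq> - F z"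
    using injective_holomorphic_sqrt[OF hol inj convex_imp_contractible[OF convex_ball]] p
    unfolding \<Omega>_def by blast
  define q where "q = F x"
  have d_eq: "d = norm q ^ 2" using p(2) gF[OF x_in] by (simp add: q_def dist_norm norm_power)
  have "0 < d" unfolding d_def using bdist_pos \<open>open \<Omega>\<close> not_UNIV x_in by (simp add: \<Omega>_def)
  have ball_sub: "ball q (norm q / 3) \<subseteq> F ` ball 0 1"
  proof (rule ball_subset_if_squares_cover_ball)
    show "open (F ` ball 0 1)" using open_mapping_thm3[OF holF _ injF] by simp
    show "ball (q ^ 2) (norm q ^ 2) \<subseteq> (\<lambda>u. u ^ 2) ` F ` ball 0 1"
    proof
      fix w assume "w \<in> ball (q ^ 2) (norm q ^ 2)"
      then have "w + p \<in> ball (g x) d" using gF[OF x_in] by (simp add: d_eq q_def dist_norm)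
      then have "w + p \<in> \<Omega>" using ball_bdist_subset[of "g x" \<Omega>] x_in by (auto simp: d_def \<Omega>_def)
      then obtain z where "z \<in> ball 0 1" "w = F z ^ 2" using gF by (auto simp: \<Omega>_def)
      then show "w \<in> (\<lambda>u. u ^ 2) ` F ` ball 0 1" by blast
    qed
    show "- u \<notin> F ` ball 0 1" if "u \<in> F ` ball 0 1" for u
      using that antipodal by (metis imageE)
  qed (use x_in in \<open>simp add: q_def\<close>)
  have "norm q / 3 \<le> norm (F z + q)" if "z \<in> ball 0 1" for z
  proof (rule ccontr)
    assume "\<not> norm q / 3 \<le> norm (F z + q)"
    then have "- F z \<in> ball q (norm q / 3)" by (simp add: dist_norm add.commute)
    then obtain z' where "z' \<in> ball 0 1" "F z' = - F z"
      using ball_sub by (metis imageE subsetD)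
    then show False using antipodal[OF that] by blast
  qed
  then have "norm (deriv g x) \<le> 48 * norm q ^ 2 / (1 - norm x)"
    using norm_deriv_le_via_sqrt[OF holF gF x] \<open>0 < d\<close> d_eq by (auto simp: q_def)
  then show ?thesis using d_eq by (simp add: d_def \<Omega>_def)
qed

section \<open>A lower bound for the quasihyperbolic distance\<close>

definition qh_density :: "complex set \<Rightarrow> (real \<Rightarrow> complex) \<Rightarrow> real \<Rightarrow> real" where
  "qh_density \<Omega> \<gamma> t = norm (vector_derivative \<gamma> (at t)) / bdist \<Omega> (\<gamma> t)"

definition qh_admissible :: "complex set \<Rightarrow> complex \<Rightarrow> complex \<Rightarrow> (real \<Rightarrow> complex) \<Rightarrow> bool" where
  "qh_admissible \<Omega> z1 z2 \<gamma> \<longleftrightarrow>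
     valid_path \<gamma> \<and> arc \<gamma> \<and> path_image \<gamma> \<subseteq> \<Omega> \<and> pathstart \<gamma> = z1 \<and> pathfinish \<gamma> = z2 \<and>
     qh_density \<Omega> \<gamma> integrable_on {0..1}"

lemma qh_dist_eq_INF:
  "qh_dist \<Omega> z1 z2 = (INF \<gamma> \<in> Collect (qh_admissible \<Omega> z1 z2). integral {0..1} (qh_density \<Omega> \<gamma>))"
  unfolding qh_dist_def qh_admissible_def qh_density_def[abs_def] by (simp add: setcompr_eq_image)

lemma has_real_derivative_neg_ln_one_minus_sqnorm:
  fixes \<beta> :: "real \<Rightarrow> 'a::real_inner"
  assumes \<beta>: "(\<beta> has_vector_derivative B) (at t)" and lt1: "norm (\<beta> t) < 1"
  shows "((\<lambda>t. - ln (1 - norm (\<beta> t) ^ 2)) has_real_derivative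
           2 * (\<beta> t \<bullet> B) / (1 - norm (\<beta> t) ^ 2)) (at t)"
proof -
  have "((\<lambda>t. norm (\<beta> t) ^ 2) has_derivative (\<lambda>x. 2 *\<^sub>R (\<beta> t \<bullet> (x *\<^sub>R B)))) (at t)"
    using has_derivative_compose[OF \<beta>[unfolded has_vector_derivative_def] has_derivative_sqnorm_at]
    by (simp add: o_def)
  moreover have "(\<lambda>x. 2 *\<^sub>R (\<beta> t \<bullet> (x *\<^sub>R B))) = (*) (2 * (\<beta> t \<bullet> B))" by (auto simp: fun_eq_iff)
  ultimately have sq: "((\<lambda>t. norm (\<beta> t) ^ 2) has_real_derivative 2 * (\<beta> t \<bullet> B)) (at t)"
    by (simp add: has_field_derivative_def)
  have "0 < 1 - norm (\<beta> t) ^ 2" using lt1 by (simp add: abs_square_less_1)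
  from DERIV_minus[OF DERIV_ln_divide[THEN DERIV_chain2, OF this DERIV_diff[OF DERIV_const sq]]]
  show ?thesis by simp
qed

lemma neg_ln_one_minus_sqnorm_rate_le:
  assumes hol: "h holomorphic_on \<Omega>" and \<Omega>: "open \<Omega>" "\<Omega> \<noteq> UNIV"
    and into: "h ` \<Omega> \<subseteq> ball 0 1" and w: "w \<in> \<Omega>"
  shows "2 * (h w \<bullet> (v * deriv h w)) / (1 - norm (h w) ^ 2) \<le> 4 * (norm v / bdist \<Omega> w)"
proof -
  have "norm (h w) < 1" using into w by auto
  then have pos: "0 < 1 - norm (h w) ^ 2" by (simp add: abs_square_less_1)
  have "h w \<bullet> (v * deriv h w) \<le> norm (h w) * norm (v * deriv h w)"
    by (rule norm_cauchy_schwarz)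
  also have "\<dots> \<le> norm v * norm (deriv h w)"
    using \<open>norm (h w) < 1\<close> by (simp add: norm_mult mult_left_le_one_le)
  also have "\<dots> \<le> norm v * (2 * (1 - norm (h w) ^ 2) / bdist \<Omega> w)"
    using norm_deriv_le_bdist_of_disc_valued[OF hol \<Omega> into w] by (intro mult_left_mono) auto
  also have "\<dots> = 2 * (norm v / bdist \<Omega> w) * (1 - norm (h w) ^ 2)"
    by simp
  finally show ?thesis using pos by (simp add: pos_divide_le_eq)
qed

lemma ln_one_minus_sqnorm_diff_le_qh_length:
  assumes hol: "h holomorphic_on \<Omega>" and \<Omega>: "open \<Omega>" "\<Omega> \<noteq> UNIV" and into: "h ` \<Omega> \<subseteq> ball 0 1"
    and \<gamma>: "valid_path \<gamma>" "path_image \<gamma> \<subseteq> \<Omega>" and int: "qh_density \<Omega> \<gamma> integrable_on {0..1}"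
  shows "ln (1 - norm (h (pathstart \<gamma>)) ^ 2) - ln (1 - norm (h (pathfinish \<gamma>)) ^ 2)
           \<le> 4 * integral {0..1} (qh_density \<Omega> \<gamma>)"
proof -
  define \<beta> where "\<beta> = h \<circ> \<gamma>"
  define V where "V t = vector_derivative \<gamma> (at t)" for t
  define D where "D t = 2 * (\<beta> t \<bullet> (V t * deriv h (\<gamma> t))) / (1 - norm (\<beta> t) ^ 2)" for t
  have \<gamma>_in: "\<gamma> t \<in> \<Omega>" if "t \<in> {0..1}" for t using \<gamma>(2) that by (auto simp: path_image_def)
  have \<beta>_lt_1: "norm (\<beta> t) < 1" if "t \<in> {0..1}" for t
    using into \<gamma>_in[OF that] by (auto simp: \<beta>_def image_subset_iff)
  then have pos: "0 < 1 - norm (\<beta> t) ^ 2" if "t \<in> {0..1}" for t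
    using that by (simp add: abs_square_less_1)
  obtain T where "finite T" and C1: "\<gamma> C1_differentiable_on {0..1} - T"
    using \<gamma>(1) unfolding valid_path_def piecewise_C1_differentiable_on_def by blast
  have deriv: "((\<lambda>t. - ln (1 - norm (\<beta> t) ^ 2)) has_vector_derivative D t) (at t)"
    if t: "t \<in> {0<..<1} - T" for t
  proof -
    have "(\<gamma> has_vector_derivative V t) (at t)"
      using C1 t by (auto simp: C1_differentiable_on_eq V_def vector_derivative_works[symmetric])
    moreover have "(h has_field_derivative deriv h (\<gamma> t)) (at (\<gamma> t))"
      using holomorphic_derivI[OF hol \<Omega>(1) \<gamma>_in] t by simp
    ultimately have "(\<beta> has_vector_derivative V t * deriv h (\<gamma> t)) (at t)"
      unfolding \<beta>_def by (rule field_vector_diff_chain_at)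
    from has_real_derivative_neg_ln_one_minus_sqnorm[OF this \<beta>_lt_1] t
    show ?thesis by (simp add: D_def has_real_derivative_iff_has_vector_derivative)
  qed
  have cont: "continuous_on {0..1} (\<lambda>t. - ln (1 - norm (\<beta> t) ^ 2))"
  proof -
    have "continuous_on {0..1} \<gamma>" using valid_path_imp_path[OF \<gamma>(1)] by (simp add: path_def)
    moreover have "continuous_on (\<gamma> ` {0..1}) h"
      using holomorphic_on_imp_continuous_on[OF hol] \<gamma>(2) unfolding path_image_def
      by (rule continuous_on_subset)
    ultimately have "continuous_on {0..1} \<beta>" unfolding \<beta>_def by (rule continuous_on_compose)
    then show ?thesis
      using pos by (intro continuous_intros) force+
  qed
  have "(D has_integral (- ln (1 - norm (\<beta> 1) ^ 2)) - (- ln (1 - norm (\<beta> 0) ^ 2))) {0..1}"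
    by (rule fundamental_theorem_of_calculus_interior_strong[OF \<open>finite T\<close> _ deriv cont]) simp
  moreover have "D t \<le> 4 * qh_density \<Omega> \<gamma> t" if "t \<in> {0..1}" for t
    using neg_ln_one_minus_sqnorm_rate_le[OF hol \<Omega> into \<gamma>_in[OF that]]
    by (simp add: D_def qh_density_def V_def \<beta>_def)
  ultimately show ?thesis
    using has_integral_le[OF _ integrable_integral[OF int[THEN integrable_cmul[of _ _ 4]]]]
    by (simp add: \<beta>_def pathstart_def pathfinish_def)
qed

text \<open>The admissible arc only makes the infimum defining \<^const>\<open>qh_dist\<close> range over a nonempty
  set; the value of \<open>Inf {}\<close> is unspecified.\<close>

lemma ln_one_minus_sqnorm_diff_le_qh_dist:
  assumes hol: "h holomorphic_on \<Omega>" and \<Omega>: "open \<Omega>" "\<Omega> \<noteq> UNIV" and into: "h ` \<Omega> \<subseteq> ball 0 1"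
    and admissible: "qh_admissible \<Omega> z1 z2 \<gamma>"
  shows "ln (1 - norm (h z1) ^ 2) - ln (1 - norm (h z2) ^ 2) \<le> 4 * qh_dist \<Omega> z1 z2"
proof -
  have "(ln (1 - norm (h z1) ^ 2) - ln (1 - norm (h z2) ^ 2)) / 4 \<le> qh_dist \<Omega> z1 z2"
    unfolding qh_dist_eq_INF
  proof (rule cINF_greatest)
    show "Collect (qh_admissible \<Omega> z1 z2) \<noteq> {}" using admissible by blast
    fix \<gamma> assume "\<gamma> \<in> Collect (qh_admissible \<Omega> z1 z2)"
    then show "(ln (1 - norm (h z1) ^ 2) - ln (1 - norm (h z2) ^ 2)) / 4
                 \<le> integral {0..1} (qh_density \<Omega> \<gamma>)"
      using ln_one_minus_sqnorm_diff_le_qh_length[OF hol \<Omega> into] unfolding qh_admissible_def by force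
  qed
  then show ?thesis by simp
qed

lemma qh_density_integrable_holomorphic_image_linepath:
  assumes hol: "g holomorphic_on S" and S: "open S" "closed_segment a b \<subseteq> S"
    and \<Omega>: "open \<Omega>" "\<Omega> \<noteq> UNIV" and into: "g ` S \<subseteq> \<Omega>"
  shows "qh_density \<Omega> (g \<circ> linepath a b) integrable_on {0..1}"
proof -
  have lp_in: "linepath a b t \<in> S" if "t \<in> {0..1}" for t
    using S(2) that by (auto simp: linepath_in_path)
  have "continuous_on {0..1} (linepath a b)" by (rule continuous_on_linepath)
  moreover have "continuous_on (linepath a b ` {0..1}) g"
    "continuous_on (linepath a b ` {0..1}) (deriv g)"
    using lp_in holomorphic_on_imp_continuous_on[OF hol]
      holomorphic_on_imp_continuous_on[OF holomorphic_deriv[OF hol S(1)]]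
    by (auto intro: continuous_on_subset)
  ultimately have cont: "continuous_on {0..1} (g \<circ> linepath a b)"
    "continuous_on {0..1} (deriv g \<circ> linepath a b)"
    by (blast intro: continuous_on_compose)+
  have "bdist \<Omega> (g (linepath a b t)) \<noteq> 0" if "t \<in> {0..1}" for t
    using bdist_pos[OF \<Omega>] into lp_in[OF that] by (metis image_subset_iff less_irrefl)
  then have cont_density: "continuous_on {0..1}
      (\<lambda>t. norm ((b - a) * deriv g (linepath a b t)) / bdist \<Omega> (g (linepath a b t)))"
    using cont unfolding bdist_def o_def by (intro continuous_intros continuous_on_infdist) auto
  have vd: "vector_derivative (g \<circ> linepath a b) (at t) = (b - a) * deriv g (linepath a b t)"
    if "t \<in> {0..1}" for t
    using field_vector_diff_chain_at[OF has_vector_derivative_linepath_within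
        holomorphic_derivI[OF hol S(1) lp_in[OF that]]]
    by (rule vector_derivative_at)
  show ?thesis
    unfolding qh_density_def
    by (rule integrable_eq[OF integrable_continuous_interval[OF cont_density]]) (simp add: vd)
qed

lemma qh_admissible_holomorphic_image_linepath:
  assumes hol: "g holomorphic_on S" and S: "open S" "closed_segment a b \<subseteq> S"
    and inj: "inj_on g S" and "a \<noteq> b"
    and \<Omega>: "open \<Omega>" "\<Omega> \<noteq> UNIV" and into: "g ` S \<subseteq> \<Omega>"
  shows "qh_admissible \<Omega> (g a) (g b) (g \<circ> linepath a b)"
  unfolding qh_admissible_def
proof (intro conjI)
  show "valid_path (g \<circ> linepath a b)"
    using valid_path_compose_holomorphic[OF valid_path_linepath hol S(1)] S(2) by simp
  show "arc (g \<circ> linepath a b)"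
    unfolding arc_def
  proof
    show "path (g \<circ> linepath a b)"
      using holomorphic_on_imp_continuous_on[OF hol] S(2)
      by (intro path_continuous_image) (auto intro: continuous_on_subset)
    show "inj_on (g \<circ> linepath a b) {0..1}"
      using arc_imp_inj_on[OF arc_linepath[OF \<open>a \<noteq> b\<close>]] inj_on_subset[OF inj S(2)]
      by (intro comp_inj_on) (simp_all add: path_image_linepath[unfolded path_image_def])
  qed
  show "path_image (g \<circ> linepath a b) \<subseteq> \<Omega>"
    using S(2) into by (auto simp: path_image_compose)
  show "qh_density \<Omega> (g \<circ> linepath a b) integrable_on {0..1}"
    by (rule qh_density_integrable_holomorphic_image_linepath[OF hol S \<Omega> into])
qed (simp_all add: pathstart_compose pathfinish_compose)

lemma qh_dist_ge_conformal_disc: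
  assumes hol: "g holomorphic_on ball 0 1" and inj: "inj_on g (ball 0 1)"
    and not_UNIV: "g ` ball 0 1 \<noteq> UNIV" and a: "a \<in> ball 0 1" and b: "b \<in> ball 0 1" and "a \<noteq> b"
  shows "ln (1 - norm a ^ 2) - ln (1 - norm b ^ 2) \<le> 4 * qh_dist (g ` ball 0 1) (g a) (g b)"
proof -
  have "open (g ` ball 0 1)" using open_mapping_thm3[OF hol _ inj] by simp
  obtain h where holh: "h holomorphic_on g ` ball 0 1" and hg: "\<And>z. z \<in> ball 0 1 \<Longrightarrow> h (g z) = z"
    using holomorphic_has_inverse[OF hol open_ball inj] by metis
  have into: "h ` g ` ball 0 1 \<subseteq> ball 0 1" unfolding image_image using hg by simp
  have "closed_segment a b \<subseteq> ball 0 1" using a b by (simp add: closed_segment_subset)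
  then have "qh_admissible (g ` ball 0 1) (g a) (g b) (g \<circ> linepath a b)"
    using qh_admissible_holomorphic_image_linepath[OF hol open_ball _ inj \<open>a \<noteq> b\<close>
        \<open>open (g ` ball 0 1)\<close> not_UNIV order_refl] by blast
  from ln_one_minus_sqnorm_diff_le_qh_dist[OF holh \<open>open (g ` ball 0 1)\<close> not_UNIV into this]
  show ?thesis by (simp add: hg[OF a] hg[OF b])
qed

lemma ln_inverse_one_minus_le:
  fixes r :: real
  assumes "0 \<le> r" "r < 1"
  shows "ln (1 / (1 - r)) - ln 2 \<le> - ln (1 - r ^ 2)"
proof -
  have "1 - r ^ 2 \<le> 2 * (1 - r)"
    using zero_le_power2[of "1 - r"] by (simp add: power2_eq_square algebra_simps)
  moreover have "0 < 1 - r ^ 2" using assms by (simp add: abs_square_less_1)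
  ultimately have "ln (1 - r ^ 2) \<le> ln (2 * (1 - r))" by simp
  also have "\<dots> = ln 2 + ln (1 - r)" using assms by (intro ln_mult_pos) auto
  also have "\<dots> = ln 2 - ln (1 / (1 - r))" using assms by (simp add: ln_div)
  finally show ?thesis by simp
qed

lemma log_le_qh_dist_conformal_disc:
  assumes hol: "g holomorphic_on ball 0 1" and inj: "inj_on g (ball 0 1)"
    and not_UNIV: "g ` ball 0 1 \<noteq> UNIV" and a: "a \<in> ball 0 1" and x: "norm x < 1"
    and large: "2 * (ln 2 - ln (1 - norm a ^ 2)) < ln (1 / (1 - norm x))"
  shows "ln (1 / (1 - norm x)) \<le> 8 * qh_dist (g ` ball 0 1) (g a) (g x)"
proof -
  define L where "L = ln (1 / (1 - norm x))"
  have L_le: "L - ln 2 \<le> - ln (1 - norm x ^ 2)"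
    unfolding L_def using x by (intro ln_inverse_one_minus_le) auto
  have large': "2 * ln 2 - 2 * ln (1 - norm a ^ 2) < L" using large by (simp add: L_def)
  have "x \<noteq> a"
  proof
    assume "x = a"
    then have "L - ln 2 \<le> - ln (1 - norm a ^ 2)" using L_le by simp
    moreover have "ln (1 - norm a ^ 2) \<le> 0" using a by (simp add: abs_square_less_1 less_imp_le)
    moreover have "0 < ln (2::real)" by simp
    ultimately show False using large' by linarith
  qed
  then have "ln (1 - norm a ^ 2) - ln (1 - norm x ^ 2) \<le> 4 * qh_dist (g ` ball 0 1) (g a) (g x)"
    using qh_dist_ge_conformal_disc[OF hol inj not_UNIV a] x by simp
  then show ?thesis using L_le large' unfolding L_def by linarith
qed

lemma le_powr_of_growth:
  fixes s L c d d0 :: real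
  assumes s: "s < 1" and L: "0 < L" and c: "0 < c" and d: "0 < d" and d0: "0 < d0"
    and growth: "L / c \<le> (d0 / d) powr (1 - s)"
  shows "d \<le> d0 * c powr (1 / (1 - s)) * L powr (1 / (s - 1))"
proof -
  define e where "e = 1 / (1 - s)"
  have e: "0 < e" "1 / (s - 1) = - e" using s by (simp_all add: e_def field_simps)
  have "(L / c) powr e \<le> ((d0 / d) powr (1 - s)) powr e"
    using growth L c e(1) by (intro powr_mono2) auto
  also have "\<dots> = d0 / d" using s d d0 by (simp add: powr_powr e_def)
  finally have "d * (L / c) powr e \<le> d0" using d by (simp add: field_simps)
  then have "d \<le> d0 / (L / c) powr e" using L c by (simp add: field_simps)
  also have "\<dots> = d0 * c powr e * L powr (- e)"
    using L c by (simp add: powr_divide powr_minus field_simps)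
  finally show ?thesis unfolding e e_def .
qed

lemma le_powr_of_le:
  fixes s L M d D :: real
  assumes s: "s < 1" and L: "0 < L" "L \<le> M" and d: "d \<le> D" and D: "0 \<le> D"
  shows "d \<le> D * M powr (1 / (1 - s)) * L powr (1 / (s - 1))"
proof -
  define e where "e = 1 / (1 - s)"
  have e: "0 < e" "1 / (s - 1) = - e" using s by (simp_all add: e_def field_simps)
  have "L powr e \<le> M powr e" using L e(1) by (intro powr_mono2) auto
  then have "1 \<le> M powr e * L powr (- e)" using L by (simp add: powr_minus field_simps)
  then have "D \<le> D * (M powr e * L powr (- e))" using D by (simp add: mult_le_cancel_left1)
  then show ?thesis unfolding e e_def using d by (simp add: mult.assoc)
qed

lemma bdist_conformal_disc_le_log_powr:
  assumes s: "s < 1" and bnd: "bounded \<Omega>"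
    and hol: "g holomorphic_on ball 0 1" and bij: "bij_betw g (ball 0 1) \<Omega>" and a: "a \<in> ball 0 1"
    and qh_growth: "\<And>z. z \<in> \<Omega> \<Longrightarrow> qh_dist \<Omega> (g a) z \<le> (bdist \<Omega> (g a) / bdist \<Omega> z) powr (1 - s)"
    and x: "1/2 \<le> norm x" "norm x < 1"
  defines "K \<equiv> 2 * (ln 2 - ln (1 - norm a ^ 2))"
  shows "bdist \<Omega> (g x) \<le> max (bdist \<Omega> (g a) * 8 powr (1 / (1 - s))) (diameter \<Omega> * K powr (1 / (1 - s)))
           * ln (1 / (1 - norm x)) powr (1 / (s - 1))"
proof -
  have inj: "inj_on g (ball 0 1)" and \<Omega>: "\<Omega> = g ` ball 0 1"
    using bij by (auto simp: bij_betw_def)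
  have not_UNIV: "\<Omega> \<noteq> UNIV" using bnd not_bounded_UNIV by blast
  have "open \<Omega>" unfolding \<Omega> using open_mapping_thm3[OF hol _ inj] by simp
  define C where "C = max (bdist \<Omega> (g a) * 8 powr (1 / (1 - s))) (diameter \<Omega> * K powr (1 / (1 - s)))"
  define L where "L = ln (1 / (1 - norm x))"
  define d where "d = bdist \<Omega> (g x)"
  have "g x \<in> \<Omega>" "g a \<in> \<Omega>" using a x \<Omega> by auto
  have "ln 2 \<le> L" unfolding L_def using x by (subst ln_le_cancel_iff) (auto simp: field_simps)
  then have "0 < L" using ln_gt_zero[of 2] by linarith
  show ?thesis
  proof (cases "L \<le> K")
    case True
    have "d \<le> diameter \<Omega>" unfolding d_def by (rule bdist_le_diameter[OF bnd not_UNIV \<open>g x \<in> \<Omega>\<close>])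
    then have "d \<le> diameter \<Omega> * K powr (1 / (1 - s)) * L powr (1 / (s - 1))"
      using le_powr_of_le[OF s \<open>0 < L\<close> True] diameter_ge_0[OF bnd] by blast
    also have "\<dots> \<le> C * L powr (1 / (s - 1))"
      unfolding C_def by (intro mult_right_mono) auto
    finally show ?thesis by (simp add: d_def L_def C_def)
  next
    case False
    have "L \<le> 8 * qh_dist \<Omega> (g a) (g x)"
      using log_le_qh_dist_conformal_disc[OF hol inj not_UNIV[unfolded \<Omega>] a] x False
      by (simp add: \<Omega> K_def L_def)
    also have "\<dots> \<le> 8 * (bdist \<Omega> (g a) / d) powr (1 - s)"
      using qh_growth[OF \<open>g x \<in> \<Omega>\<close>] by (simp add: d_def)
    finally have "L / 8 \<le> (bdist \<Omega> (g a) / d) powr (1 - s)" by simp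
    then have "d \<le> bdist \<Omega> (g a) * 8 powr (1 / (1 - s)) * L powr (1 / (s - 1))"
      using bdist_pos[OF \<open>open \<Omega>\<close> not_UNIV \<open>g x \<in> \<Omega>\<close>] bdist_pos[OF \<open>open \<Omega>\<close> not_UNIV \<open>g a \<in> \<Omega>\<close>]
        \<open>0 < L\<close>
      by (intro le_powr_of_growth[OF s]) (auto simp: d_def)
    also have "\<dots> \<le> C * L powr (1 / (s - 1))"
      unfolding C_def by (intro mult_right_mono) auto
    finally show ?thesis by (simp add: d_def L_def C_def)
  qed
qed

lemma hyperbolic_growth_bdist_le_log_powr:
  assumes s: "s < 1" and growth: "hyperbolic_growth s \<Omega>" and bnd: "bounded \<Omega>"
    and hol: "g holomorphic_on ball 0 1" and bij: "bij_betw g (ball 0 1) \<Omega>"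
  obtains C where "0 \<le> C"
    "\<And>x. 1/2 \<le> norm x \<Longrightarrow> norm x < 1 \<Longrightarrow>
       bdist \<Omega> (g x) \<le> C * ln (1 / (1 - norm x)) powr (1 / (s - 1))"
proof -
  obtain z0 where z0: "z0 \<in> \<Omega>"
    and qh_growth: "\<And>z. z \<in> \<Omega> \<Longrightarrow> qh_dist \<Omega> z0 z \<le> (bdist \<Omega> z0 / bdist \<Omega> z) powr (1 - s)"
    using growth unfolding hyperbolic_growth_def by blast
  obtain a where a: "a \<in> ball 0 1" "g a = z0" using z0 bij by (auto simp: bij_betw_def)
  define C where "C = max (bdist \<Omega> (g a) * 8 powr (1 / (1 - s)))
    (diameter \<Omega> * (2 * (ln 2 - ln (1 - norm a ^ 2))) powr (1 / (1 - s)))"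
  have "0 \<le> bdist \<Omega> (g a)" by (simp add: bdist_def infdist_nonneg)
  then have "0 \<le> C" by (simp add: C_def le_max_iff_disj)
  moreover note bdist_conformal_disc_le_log_powr[OF s bnd hol bij a(1), folded C_def]
  ultimately show ?thesis using that qh_growth a(2) by blast
qed

theorem mainTheorem4:
  fixes s :: real and \<Omega> :: "complex set" and g :: "complex \<Rightarrow> complex"
  assumes "0 < s" "s < 1"
    and "jordan_domain \<Omega>"
    and "hyperbolic_growth s \<Omega>"
    and "g holomorphic_on ball 0 1" "bij_betw g (ball 0 1) \<Omega>"
  shows "\<exists>C::real. \<forall>x. 1/2 \<le> norm x \<and> norm x < 1 \<longrightarrow>
           bdist \<Omega> (g x) \<le> C * ln (1 / (1 - norm x)) powr (1 / (s - 1)) \<and>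
           norm (deriv g x) \<le> C / (1 - norm x) * ln (1 / (1 - norm x)) powr (1 / (s - 1))"
proof -
  have bnd: "bounded \<Omega>" using assms(3) by (rule jordan_domain_bounded)
  have inj: "inj_on g (ball 0 1)" and \<Omega>: "\<Omega> = g ` ball 0 1"
    using assms(6) by (auto simp: bij_betw_def)
  have not_UNIV: "g ` ball 0 1 \<noteq> UNIV" using bnd not_bounded_UNIV unfolding \<Omega> by metis
  obtain C where "0 \<le> C" and C: "\<And>x. 1/2 \<le> norm x \<Longrightarrow> norm x < 1 \<Longrightarrow>
      bdist \<Omega> (g x) \<le> C * ln (1 / (1 - norm x)) powr (1 / (s - 1))"
    using hyperbolic_growth_bdist_le_log_powr[OF assms(2,4) bnd assms(5,6)] by blast
  show ?thesis
  proof (intro exI[of _ "48 * C"] allI impI conjI)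
    fix x :: complex assume x: "1/2 \<le> norm x \<and> norm x < 1"
    define P where "P = ln (1 / (1 - norm x)) powr (1 / (s - 1))"
    have dist: "bdist \<Omega> (g x) \<le> C * P" using C x by (simp add: P_def)
    also have "\<dots> \<le> 48 * C * P" using \<open>0 \<le> C\<close> by (simp add: P_def mult_right_mono)
    finally show "bdist \<Omega> (g x) \<le> 48 * C * ln (1 / (1 - norm x)) powr (1 / (s - 1))"
      by (simp only: P_def)
    have "norm (deriv g x) \<le> 48 * bdist \<Omega> (g x) / (1 - norm x)"
      using norm_deriv_le_bdist[OF assms(5) inj not_UNIV] x \<Omega> by simp
    also have "\<dots> \<le> 48 * (C * P) / (1 - norm x)"
      using dist x by (intro divide_right_mono) auto
    finally show "norm (deriv g x) \<le> 48 * C / (1 - norm x) * ln (1 / (1 - norm x)) powr (1 / (s - 1))"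
      by (simp add: P_def)
  qed
qed

end
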